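(* Let $A\in\mathbb{R}^{n\times n}$, $B\in\mathbb{R}^{n\times m}$, $C\in\mathbb{R}^{p\times n}$ and let $\mathscr{G}$ be a weighted directed graph on $N$ nodes with Laplacian $\mathcal{L}$, and consider the dynamic network $(A,B,C,\mathscr{G})$ described in the context. Let $L_{G}=+\infty$, $L_{K}=+\infty$ and $\varrho=1$. Suppose that for any given positive constants $C_{x}$, $C_{\hat{x}}$, $C_{\hat{u}}$ there exist a communication protocol $H(\gamma,\alpha,\alpha_{u},L,L_{u},G)\in\mathscr{H}(\varrho,L_{G})$ and a control protocol $U(K)\in\mathscr{U}(L_{K})$ such that for any initial conditions with $\|X(0)\|_\infty<C_{x}$, $\|\hat{X}(0)\|_\infty<C_{\hat{x}}$ and $\|\hat{U}(0)\|_\infty<C_{\hat{u}}$, the closed-loop network achieves cooperative stabilization under $H$ and $U$, i.e. $\lim_{t\to\infty}(x_j(t)-x_i(t))=0$ for all $i,j=1,\dots,N$. Then $(A,B)$ is stabilizable.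
   Context: Agents $i=1,\dots,N$ have dynamics $x_i(t+1)=Ax_i(t)+Bu_i(t)$, $y_i(t)=Cx_i(t)$, $t=0,1,\dots$. The communication graph $\mathscr{G}$ has node set $\{1,\dots,N\}$ and weighted adjacency matrix $\mathscr{A}=[a_{ij}]$ with $a_{ii}=0$, $a_{ij}\ge0$, and $a_{ij}>0$ iff there is a channel from $j$ to $i$; $N_i=\{j: a_{ij}>0\}$. The Laplacian is $\mathcal{L}=\mathrm{diag}(\sum_j a_{1j},\dots,\sum_j a_{Nj})-\mathscr{A}$. Norms: for a vector, $\|\cdot\|_\infty$ is the max norm; for a matrix, $\|\cdot\|$ is the spectral (Euclidean operator) norm. Quantizer: for $p\in(0,1]$ and a positive integer $M$, $Q_{p,M}(y)=ip$ if $ip-p/2\le y<ip+p/2$, $i=0,1,\dots,M-1$; $Q_{p,M}(y)=Mp$ if $y\ge Mp-p/2$; $Q_{p,M}(y)=-Q_{p,M}(-y)$ if $y<-p/2$; applied componentwise to vectors. Communication protocol set: for $\varrho\in(0,1]$ and $L_G\in\mathbb{R}^+\cup\{+\infty\}$, $\mathscr{H}(\varrho,L_G)$ consists of protocols $H(\gamma,\alpha,\alpha_u,L,L_u,G)$ with $\gamma\in(0,\varrho)$, $\alpha,\alpha_u\in(0,1]$, positive integers $L,L_u$, and $G\in\mathbb{R}^{n\times p}$ with $\|G\|<L_G$. Under such a protocol, each agent $j$ runs the encoder: $\hat x_j(0)=\hat x_{j0}$, $\hat u_j(0)=\hat u_{j0}$, and for $t\ge1$: $s_j(t)=Q_{\alpha,L}\big((y_j(t-1)-C\hat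 x_j(t-1))/\gamma^{t-1}\big)$, $\hat x_j(t)=A\hat x_j(t-1)+\gamma^{t-1}Gs_j(t)+B\hat u_j(t-1)$, $s_{u,j}(t)=Q_{\alpha_u,L_u}\big((u_j(t)-\hat u_j(t-1))/\gamma^{t-1}\big)$, $\hat u_j(t)=\hat u_j(t-1)+\gamma^{t-1}s_{u,j}(t)$; the symbols $s_j(t),s_{u,j}(t)$ are sent over each channel $(j,i)$, and receiver $i$ runs the decoder $\hat x_{ji}(0)=\hat x_{j0}$, $\hat u_{ji}(0)=\hat u_{j0}$, $\hat x_{ji}(t)=A\hat x_{ji}(t-1)+\gamma^{t-1}Gs_j(t)+B\hat u_{ji}(t-1)$, $\hat u_{ji}(t)=\hat u_{ji}(t-1)+\gamma^{t-1}s_{u,j}(t)$ (so $\hat x_{ji}(t)=\hat x_j(t)$). Control protocol set: for $L_K\in\mathbb{R}^+\cup\{+\infty\}$, $\mathscr{U}(L_K)$ consists of protocols $U(K)$, $K\in\mathbb{R}^{m\times n}$ with $\|K\|<L_K$, given by $u_i(t)=K\sum_{j\in N_i}a_{ij}(\hat x_{ji}(t)-\hat x_i(t))$, $t\ge0$. Stacked vectors: $X(t)=(x_1^T(t),\dots,x_N^T(t))^T$, $\hat X(t)=(\hat x_1^T(t),\dots,\hat x_N^T(t))^T$, $\hat U(t)=(\hat u_1^T(t),\dots,\hat u_N^T(t))^T$. *)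

theory Defs
  imports "HOL-Analysis.Analysis"
begin

text \<open>Uniform quantizer Q_{p,M} on reals, written out as in the paper:
  for y >= -p/2 it returns i p with i p - p/2 <= y < i p + p/2 (i = 0..M-1),
  saturating at M p; for y < -p/2 it is odd-symmetric.\<close>
definition quant_nonneg :: "real \<Rightarrow> nat \<Rightarrow> real \<Rightarrow> real" where
  "quant_nonneg p M y =
     (if y \<ge> real M * p - p / 2 then real M * p
      else p * of_int \<lfloor>y / p + 1 / 2\<rfloor>)"

definition quant :: "real \<Rightarrow> nat \<Rightarrow> real \<Rightarrow> real" where
  "quant p M y = (if y < - p / 2 then - quant_nonneg p M (- y) else quant_nonneg p M y)"

definition vquant :: "real \<Rightarrow> nat \<Rightarrow> real ^ 'k \<Rightarrow> real ^ 'k" where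
  "vquant p M v = (\<chi> k. quant p M (v $ k))"

text \<open>Trajectories are indexed by time first, then agent:
  x t i = x_i(t), xh t j = hat x_j(t), uh t j = hat u_j(t), s t j = s_j(t),
  su t j = s_{u,j}(t), xd t i j = hat x_{ji}(t) (decoder of j's signal at i),
  ud t i j = hat u_{ji}(t), u t i = u_i(t).\<close>
definition closed_loop ::
  "real^'n^'n \<Rightarrow> real^'m^'n \<Rightarrow> real^'n^'p \<Rightarrow> ('N \<Rightarrow> 'N \<Rightarrow> real) \<Rightarrow>
   real \<Rightarrow> real \<Rightarrow> real \<Rightarrow> nat \<Rightarrow> nat \<Rightarrow> real^'p^'n \<Rightarrow> real^'n^'m \<Rightarrow>
   (nat \<Rightarrow> 'N \<Rightarrow> real^'n) \<Rightarrow> (nat \<Rightarrow> 'N \<Rightarrow> real^'n) \<Rightarrow> (nat \<Rightarrow> 'N \<Rightarrow> real^'m) \<Rightarrow>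
   (nat \<Rightarrow> 'N \<Rightarrow> real^'p) \<Rightarrow> (nat \<Rightarrow> 'N \<Rightarrow> real^'m) \<Rightarrow>
   (nat \<Rightarrow> 'N \<Rightarrow> 'N \<Rightarrow> real^'n) \<Rightarrow> (nat \<Rightarrow> 'N \<Rightarrow> 'N \<Rightarrow> real^'m) \<Rightarrow>
   (nat \<Rightarrow> 'N \<Rightarrow> real^'m) \<Rightarrow> bool" where
  "closed_loop A B C a \<gamma> \<alpha> \<alpha>u L Lu G K x xh uh s su xd ud u \<longleftrightarrow>
     \<comment> \<open>agent dynamics\<close>
     (\<forall>t i. x (Suc t) i = A *v x t i + B *v u t i) \<and>
     \<comment> \<open>encoder of agent j, t >= 1 (written with t+1)\<close>
     (\<forall>t j. s (Suc t) j = vquant \<alpha> L ((1 / \<gamma> ^ t) *\<^sub>R (C *v x t j - C *v xh t j))) \<and>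
     (\<forall>t j. xh (Suc t) j = A *v xh t j + (\<gamma> ^ t) *\<^sub>R (G *v s (Suc t) j) + B *v uh t j) \<and>
     (\<forall>t j. su (Suc t) j = vquant \<alpha>u Lu ((1 / \<gamma> ^ t) *\<^sub>R (u (Suc t) j - uh t j))) \<and>
     (\<forall>t j. uh (Suc t) j = uh t j + (\<gamma> ^ t) *\<^sub>R su (Suc t) j) \<and>
     \<comment> \<open>decoder at receiver i of the symbols sent by j\<close>
     (\<forall>i j. xd 0 i j = xh 0 j \<and> ud 0 i j = uh 0 j) \<and>
     (\<forall>t i j. xd (Suc t) i j = A *v xd t i j + (\<gamma> ^ t) *\<^sub>R (G *v s (Suc t) j) + B *v ud t i j) \<and>
     (\<forall>t i j. ud (Suc t) i j = ud t i j + (\<gamma> ^ t) *\<^sub>R su (Suc t) j) \<and>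
     \<comment> \<open>control protocol U(K), neighbours N_i = {j. a i j > 0}\<close>
     (\<forall>t i. u t i = K *v (\<Sum>j\<in>{j. a i j > 0}. a i j *\<^sub>R (xd t i j - xh t i)))"

text \<open>Eigenvalues of a real square matrix are taken over the complex numbers.\<close>
definition complexify :: "real^'n^'n \<Rightarrow> complex^'n^'n" where
  "complexify M = (\<chi> i j. complex_of_real (M $ i $ j))"

definition schur_stable :: "real^'n^'n \<Rightarrow> bool" where
  "schur_stable M \<longleftrightarrow>
     (\<forall>(ev::complex) (v::complex^'n). v \<noteq> 0 \<and> complexify M *v v = ev *s v \<longrightarrow> cmod ev < 1)"

definition stabilizable :: "real^'n^'n \<Rightarrow> real^'m^'n \<Rightarrow> bool" where
  "stabilizable A B \<longleftrightarrow> (\<exists>K::real^'n^'m. schur_stable (A + B ** K))"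

end

theory Submission
  imports Defs
begin

text \<open>Put an arbitrary state \<open>z\<close> at one agent \<open>j\<close> and \<open>0\<close> at all others. The difference
  \<open>x\<^sub>j - x\<^sub>i\<close> to another agent is then a trajectory of \<open>x(t+1) = A x(t) + B v(t)\<close> from \<open>z\<close>,
  driven by \<open>v = u\<^sub>j - u\<^sub>i\<close>, and cooperative stabilization drives it to \<open>0\<close>: the pair \<open>(A, B)\<close>
  is asymptotically null controllable. Superposing such controls for the unit vectors and
  repeating a time block that halves the state yields, for every \<open>z\<close>, a control whose cost
  \<open>\<Sum>\<^sub>t \<bar>x(t)\<bar>\<^sup>2 + \<bar>v(t)\<bar>\<^sup>2\<close> is at most \<open>c \<bar>z\<bar>\<^sup>2\<close>. The Riccati value iteration \<open>P\<^sub>k\<close> is then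
  increasing and bounded by \<open>c I\<close>, so some step \<open>P\<^sub>k\<^sub>+\<^sub>1 - P\<^sub>k\<close> is small, and \<open>P\<^sub>k\<close> is a
  Lyapunov matrix for \<open>A + B K\<^sub>k\<close> with the Riccati gain \<open>K\<^sub>k\<close>, which is hence Schur stable.\<close>

section \<open>Quadratic forms\<close>

definition quad_form :: "real^'n^'n \<Rightarrow> real^'n \<Rightarrow> real" where
  "quad_form S z = inner z (S *v z)"

definition psd_matrix :: "real^'n^'n \<Rightarrow> bool" where
  "psd_matrix S \<longleftrightarrow> transpose S = S \<and> (\<forall>z. quad_form S z \<ge> 0)"

lemma transpose_add_matrix: "transpose ((M::real^'n^'m) + N) = transpose M + transpose N"
  by (simp add: transpose_def vec_eq_iff)

lemma transpose_diff_matrix: "transpose ((M::real^'n^'m) - N) = transpose M - transpose N"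
  by (simp add: transpose_def vec_eq_iff)

lemma matrix_vector_mult_uminus_left: "(- M) *v z = - ((M::real^'n^'m) *v z)"
  by (simp add: vec_eq_iff matrix_vector_mult_def sum_negf)

lemma matrix_vector_mult_uminus_right: "(M::real^'n^'m) *v (- z) = - (M *v z)"
  by (metis diff_0 matrix_vector_mult_0_right matrix_vector_mult_diff_distrib)

lemma inner_matrix_vector_transpose:
  "inner ((M::real^'n^'m) *v x) y = inner x (transpose M *v y)"
  by (metis dot_lmul_matrix inner_commute transpose_matrix_vector)

lemma inner_symmetric_matrix:
  "transpose S = S \<Longrightarrow> inner x ((S::real^'n^'n) *v y) = inner y (S *v x)"
  by (metis inner_commute inner_matrix_vector_transpose)

lemma quad_form_add:
  assumes "transpose S = S"
  shows "quad_form S (x + y) = quad_form S x + 2 * inner y (S *v x) + quad_form S y"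
  using inner_symmetric_matrix[OF assms, of x y]
  by (simp add: quad_form_def matrix_vector_right_distrib inner_add_left inner_add_right)

lemma quad_form_scaleR: "quad_form S (c *\<^sub>R z) = c\<^sup>2 * quad_form S z"
  by (simp add: quad_form_def matrix_vector_mult_scaleR power2_eq_square)

lemma quad_form_diff_matrix: "quad_form (S - S') z = quad_form S z - quad_form S' z"
  by (simp add: quad_form_def matrix_vector_mult_diff_rdistrib inner_diff_right)

lemma quad_form_add_matrix: "quad_form (S + S') z = quad_form S z + quad_form S' z"
  by (simp add: quad_form_def matrix_vector_mult_add_rdistrib inner_add_right)

lemma quad_form_mat_1: "quad_form (mat 1) z = (norm z)\<^sup>2"
  by (simp add: quad_form_def power2_norm_eq_inner)

lemma quad_form_congruence:
  "quad_form (transpose M ** S ** M) z = quad_form S ((M::real^'n^'m) *v z)"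
  unfolding quad_form_def
  by (metis inner_matrix_vector_transpose matrix_vector_mul_assoc)

section \<open>The Riccati map\<close>

lemma matrix_inv_right: "invertible M \<Longrightarrow> M ** matrix_inv M = mat 1"
  unfolding invertible_def matrix_inv_def by (rule someI_ex[THEN conjunct1])

definition riccati_weight :: "real^'m^'n \<Rightarrow> real^'n^'n \<Rightarrow> real^'m^'m" where
  "riccati_weight B S = mat 1 + transpose B ** S ** B"

definition riccati_gain :: "real^'n^'n \<Rightarrow> real^'m^'n \<Rightarrow> real^'n^'n \<Rightarrow> real^'n^'m" where
  "riccati_gain A B S = - (matrix_inv (riccati_weight B S) ** transpose B ** S ** A)"

definition riccati_map :: "real^'n^'n \<Rightarrow> real^'m^'n \<Rightarrow> real^'n^'n \<Rightarrow> real^'n^'n" where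
  "riccati_map A B S =
     mat 1 + transpose (riccati_gain A B S) ** riccati_gain A B S
     + transpose (A + B ** riccati_gain A B S) ** S ** (A + B ** riccati_gain A B S)"

lemma quad_form_riccati_weight:
  "quad_form (riccati_weight B S) w = (norm w)\<^sup>2 + quad_form S (B *v w)"
  by (simp add: riccati_weight_def quad_form_add_matrix quad_form_mat_1 quad_form_congruence)

lemma invertible_riccati_weight:
  assumes "psd_matrix S"
  shows "invertible (riccati_weight B S)"
proof -
  have "w = 0" if "riccati_weight B S *v w = 0" for w
  proof -
    have "(norm w)\<^sup>2 + quad_form S (B *v w) = quad_form (riccati_weight B S) w"
      by (rule quad_form_riccati_weight[symmetric])
    also have "\<dots> = 0"
      using that by (simp add: quad_form_def)
    finally have "(norm w)\<^sup>2 + quad_form S (B *v w) = 0" .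
    with assms show "w = 0"
      unfolding psd_matrix_def by (smt (verit) norm_eq_zero zero_less_power2)
  qed
  then show ?thesis
    by (simp add: invertible_left_inverse matrix_left_invertible_ker)
qed

lemma quad_form_gram: "quad_form (transpose K ** K) z = (norm ((K::real^'n^'m) *v z))\<^sup>2"
  using quad_form_congruence[of K "mat 1" z] by (simp add: quad_form_mat_1)

lemma quad_form_riccati_map:
  "quad_form (riccati_map A B S) z =
     (norm z)\<^sup>2 + (norm (riccati_gain A B S *v z))\<^sup>2 + quad_form S (A *v z + B *v (riccati_gain A B S *v z))"
  unfolding riccati_map_def quad_form_add_matrix quad_form_mat_1 quad_form_gram quad_form_congruence
  by (simp add: matrix_vector_mult_add_rdistrib matrix_vector_mul_assoc)

lemma psd_riccati_map:
  fixes A :: "real^'n^'n" and B :: "real^'m^'n"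
  assumes "psd_matrix S"
  shows "psd_matrix (riccati_map A B S)"
proof -
  have "transpose S = S" using assms by (simp add: psd_matrix_def)
  then have "transpose (mat 1 + transpose K ** K + transpose F ** S ** F) =
      mat 1 + transpose K ** K + transpose F ** S ** F" for K :: "real^'n^'m" and F :: "real^'n^'n"
    by (simp add: transpose_add_matrix matrix_transpose_mul matrix_mul_assoc)
  then have "transpose (riccati_map A B S) = riccati_map A B S"
    unfolding riccati_map_def by blast
  moreover have "quad_form S y \<ge> 0" for y using assms by (simp add: psd_matrix_def)
  ultimately show ?thesis
    unfolding psd_matrix_def quad_form_riccati_map by simp
qed

lemma riccati_gain_stationary:
  fixes A :: "real^'n^'n" and B :: "real^'m^'n" and z :: "real^'n"
  assumes "psd_matrix S"
  defines "u \<equiv> riccati_gain A B S *v z"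
  shows "u + transpose B *v (S *v (A *v z + B *v u)) = 0"
proof -
  define R where "R = riccati_weight B S"
  define y where "y = transpose B *v (S *v (A *v z))"
  have "u = - (matrix_inv R *v y)"
    by (simp add: u_def R_def y_def riccati_gain_def matrix_vector_mult_uminus_left
        matrix_vector_mul_assoc matrix_mul_assoc del: transpose_matrix_vector)
  then have "R *v u = - ((R ** matrix_inv R) *v y)"
    by (simp add: matrix_vector_mult_uminus_right matrix_vector_mul_assoc)
  also have "\<dots> = - y"
    using matrix_inv_right[OF invertible_riccati_weight[OF assms(1), of B]]
    by (simp add: R_def)
  finally show ?thesis
    by (simp add: R_def y_def riccati_weight_def matrix_vector_mult_add_rdistrib matrix_vector_right_distrib
        matrix_vector_mul_assoc matrix_mul_assoc eq_neg_iff_add_eq_0 ac_simps del: transpose_matrix_vector)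
qed

text \<open>The gain is the minimiser of the one-step cost: the first variation of
  \<open>v \<mapsto> \<bar>v\<bar>\<^sup>2 + quad_form S (A z + B v)\<close> vanishes at the gain, so the cost at any
  other \<open>v = u + w\<close> exceeds it by \<open>\<bar>w\<bar>\<^sup>2 + quad_form S (B w)\<close>.\<close>

lemma quad_form_riccati_map_le:
  fixes A :: "real^'n^'n" and B :: "real^'m^'n"
  assumes "psd_matrix S"
  shows "quad_form (riccati_map A B S) z \<le> (norm z)\<^sup>2 + (norm v)\<^sup>2 + quad_form S (A *v z + B *v v)"
proof -
  have sym: "transpose S = S" and nonneg: "quad_form S x \<ge> 0" for x
    using assms by (auto simp: psd_matrix_def)
  define u where "u = riccati_gain A B S *v z"
  define w where "w = v - u"
  define y where "y = A *v z + B *v u"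
  have "inner (B *v w) (S *v y) = inner w (transpose B *v (S *v y))"
    by (rule inner_matrix_vector_transpose)
  also have "\<dots> = - inner w u"
    using riccati_gain_stationary[OF assms, of A B z] unfolding u_def[symmetric] y_def[symmetric]
    by (simp add: eq_neg_iff_add_eq_0 add.commute flip: inner_add_right del: transpose_matrix_vector)
  finally have cross: "inner (B *v w) (S *v y) = - inner w u" .
  have "(norm v)\<^sup>2 = (norm u)\<^sup>2 + 2 * inner w u + (norm w)\<^sup>2"
    unfolding w_def power2_norm_eq_inner by (simp add: inner_diff_left inner_diff_right inner_commute)
  moreover have "quad_form S (A *v z + B *v v) = quad_form S y + 2 * inner (B *v w) (S *v y) + quad_form S (B *v w)"
  proof -
    have "A *v z + B *v v = y + B *v w"
      by (simp add: y_def w_def matrix_vector_mult_diff_distrib)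
    then show ?thesis by (simp add: quad_form_add[OF sym])
  qed
  ultimately show ?thesis
    using cross nonneg[of "B *v w"] by (simp add: quad_form_riccati_map u_def y_def)
qed

section \<open>Finite-horizon quadratic cost and value iteration\<close>

primrec traj :: "real^'n^'n \<Rightarrow> real^'m^'n \<Rightarrow> real^'n \<Rightarrow> (nat \<Rightarrow> real^'m) \<Rightarrow> nat \<Rightarrow> real^'n" where
  "traj A B z v 0 = z"
| "traj A B z v (Suc t) = A *v traj A B z v t + B *v v t"

definition lq_cost :: "real^'n^'n \<Rightarrow> real^'m^'n \<Rightarrow> real^'n \<Rightarrow> (nat \<Rightarrow> real^'m) \<Rightarrow> nat \<Rightarrow> real" where
  "lq_cost A B z v k = (\<Sum>t<k. (norm (traj A B z v t))\<^sup>2 + (norm (v t))\<^sup>2)"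

lemma traj_Suc_shift: "traj A B z v (Suc t) = traj A B (A *v z + B *v v 0) (\<lambda>t. v (Suc t)) t"
  by (induction t) simp_all

lemma lq_cost_Suc_shift:
  "lq_cost A B z v (Suc k) = (norm z)\<^sup>2 + (norm (v 0))\<^sup>2 + lq_cost A B (A *v z + B *v v 0) (\<lambda>t. v (Suc t)) k"
  unfolding lq_cost_def
  by (subst sum.lessThan_Suc_shift) (simp add: traj_Suc_shift del: traj.simps(2) sum.lessThan_Suc)

lemma lq_cost_nonneg: "lq_cost A B z v k \<ge> 0"
  by (simp add: lq_cost_def sum_nonneg)

lemma lq_cost_mono: "k \<le> l \<Longrightarrow> lq_cost A B z v k \<le> lq_cost A B z v l"
  unfolding lq_cost_def by (intro sum_mono2) auto

primrec riccati_iter :: "real^'n^'n \<Rightarrow> real^'m^'n \<Rightarrow> nat \<Rightarrow> real^'n^'n" where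
  "riccati_iter A B 0 = 0"
| "riccati_iter A B (Suc k) = riccati_map A B (riccati_iter A B k)"

lemma psd_riccati_iter: "psd_matrix (riccati_iter A B k)"
proof (induction k)
  case 0
  show ?case by (simp add: psd_matrix_def quad_form_def transpose_def vec_eq_iff)
next
  case (Suc k)
  then show ?case by (simp add: psd_riccati_map)
qed

lemma riccati_iter_mono: "quad_form (riccati_iter A B k) z \<le> quad_form (riccati_iter A B (Suc k)) z"
proof (induction k arbitrary: z)
  case 0
  show ?case using psd_riccati_iter[of A B 1] by (simp add: psd_matrix_def quad_form_def)
next
  case (Suc k)
  define u where "u = riccati_gain A B (riccati_iter A B (Suc k)) *v z"
  have "quad_form (riccati_iter A B (Suc k)) z
      \<le> (norm z)\<^sup>2 + (norm u)\<^sup>2 + quad_form (riccati_iter A B k) (A *v z + B *v u)"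
    using quad_form_riccati_map_le[OF psd_riccati_iter] by simp
  also have "\<dots> \<le> (norm z)\<^sup>2 + (norm u)\<^sup>2 + quad_form (riccati_iter A B (Suc k)) (A *v z + B *v u)"
    using Suc.IH by simp
  also have "\<dots> = quad_form (riccati_iter A B (Suc (Suc k))) z"
    by (simp add: quad_form_riccati_map u_def)
  finally show ?case .
qed

text \<open>The iterates are the optimal finite-horizon costs (value iteration); only the lower bound
  is needed.\<close>

lemma riccati_iter_le_lq_cost: "quad_form (riccati_iter A B k) z \<le> lq_cost A B z v k"
proof (induction k arbitrary: z v)
  case 0
  show ?case by (simp add: quad_form_def lq_cost_def)
next
  case (Suc k)
  have "quad_form (riccati_iter A B (Suc k)) z
      \<le> (norm z)\<^sup>2 + (norm (v 0))\<^sup>2 + quad_form (riccati_iter A B k) (A *v z + B *v v 0)"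
    using quad_form_riccati_map_le[OF psd_riccati_iter] by simp
  also have "\<dots> \<le> lq_cost A B z v (Suc k)"
    using Suc.IH[of "A *v z + B *v v 0" "\<lambda>t. v (Suc t)"] by (simp add: lq_cost_Suc_shift)
  finally show ?case .
qed

section \<open>Lyapunov matrices and stabilizability\<close>

text \<open>If \<open>F v = \<lambda> v\<close> with \<open>v = a + i b\<close>, then \<open>F\<close> acts on \<open>span {a, b}\<close> as the rotation-dilation
  by \<open>\<lambda>\<close>, so \<open>quad_form P (F a) + quad_form P (F b) = \<bar>\<lambda>\<bar>\<^sup>2 (quad_form P a + quad_form P b)\<close>.\<close>

lemma schur_stable_if_lyapunov:
  fixes F P :: "real^'n^'n"
  assumes P: "psd_matrix P" and decrease: "\<And>z. z \<noteq> 0 \<Longrightarrow> quad_form P (F *v z) < quad_form P z"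
  shows "schur_stable F"
  unfolding schur_stable_def
proof (intro allI impI)
  fix ev :: complex and v :: "complex^'n"
  assume eig: "v \<noteq> 0 \<and> complexify F *v v = ev *s v"
  have sym: "transpose P = P" and nonneg: "quad_form P x \<ge> 0" for x
    using P by (auto simp: psd_matrix_def)
  define a where "a = (\<chi> i. Re (v$i))"
  define b where "b = (\<chi> i. Im (v$i))"
  have comp: "(\<Sum>j\<in>UNIV. complex_of_real (F$i$j) * v$j) = ev * v$i" for i
    using eig by (simp add: vec_eq_iff complexify_def matrix_vector_mult_def)
  have Fa: "F *v a = Re ev *\<^sub>R a - Im ev *\<^sub>R b"
    using arg_cong[OF comp, of Re]
    by (simp add: vec_eq_iff matrix_vector_mult_def a_def b_def)
  have Fb: "F *v b = Im ev *\<^sub>R a + Re ev *\<^sub>R b"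
    using arg_cong[OF comp, of Im]
    by (simp add: vec_eq_iff matrix_vector_mult_def a_def b_def algebra_simps)
  have rotation: "quad_form P (F *v a) + quad_form P (F *v b) = (cmod ev)\<^sup>2 * (quad_form P a + quad_form P b)"
    unfolding Fa Fb diff_conv_add_uminus cmod_power2
    using inner_symmetric_matrix[OF sym, of a b]
    by (simp add: quad_form_add[OF sym] quad_form_scaleR
        matrix_vector_mult_uminus_right algebra_simps flip: scaleR_minus_left)
  have "a \<noteq> 0 \<or> b \<noteq> 0"
    using eig by (auto simp: a_def b_def vec_eq_iff complex_eq_iff)
  then have "quad_form P (F *v a) + quad_form P (F *v b) < quad_form P a + quad_form P b"
    using decrease[of a] decrease[of b] by (cases "a = 0"; cases "b = 0") (auto simp: quad_form_def)
  moreover have "0 \<le> quad_form P (F *v a) + quad_form P (F *v b)"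
    using nonneg by simp
  ultimately have "(cmod ev)\<^sup>2 < 1"
    unfolding rotation by (smt (verit) mult_le_cancel_right1)
  then show "cmod ev < 1"
    by (smt (verit) one_le_power norm_ge_zero)
qed

lemma matrix_vector_mult_axis_component: "((D::real^'n^'m) *v axis j 1)$i = D$i$j"
  by (simp add: matrix_vector_mult_def axis_def if_distrib cong: if_cong)

lemma quad_form_axis: "quad_form D (axis i 1) = D$i$i"
  by (simp add: quad_form_def inner_axis' matrix_vector_mult_axis_component)

lemma psd_matrix_entry_bound:
  assumes "psd_matrix D"
  shows "\<bar>D$i$j\<bar> \<le> (D$i$i + D$j$j) / 2"
proof -
  have sym: "transpose D = D" and nonneg: "quad_form D x \<ge> 0" for x
    using assms by (auto simp: psd_matrix_def)
  have Dji: "D$j$i = D$i$j"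
    using sym by (metis transpose_def vec_lambda_beta)
  have "inner (c *\<^sub>R axis j 1) (D *v axis i 1) = c * D$i$j" for c
    using Dji by (simp add: inner_axis' matrix_vector_mult_axis_component)
  then have expand: "quad_form D (axis i 1 + c *\<^sub>R axis j 1) = D$i$i + 2 * (c * D$i$j) + c\<^sup>2 * D$j$j"
    for c
    by (simp add: quad_form_add[OF sym] quad_form_scaleR quad_form_axis)
  show ?thesis
    using nonneg[of "axis i 1 + 1 *\<^sub>R axis j 1"] nonneg[of "axis i 1 + (-1) *\<^sub>R axis j 1"]
    unfolding expand by (simp add: abs_le_iff)
qed

lemma quad_form_le_trace:
  fixes D :: "real^'n^'n"
  assumes "psd_matrix D"
  shows "quad_form D z \<le> CARD('n) * (\<Sum>i\<in>UNIV. D$i$i) * (norm z)\<^sup>2"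
proof -
  have "quad_form D z = (\<Sum>i\<in>UNIV. \<Sum>j\<in>UNIV. z$i * z$j * D$i$j)"
    by (simp add: quad_form_def inner_vec_def matrix_vector_mult_def sum_distrib_left ac_simps)
  also have "\<dots> \<le> (\<Sum>i\<in>UNIV. \<Sum>j\<in>(UNIV::'n set). (norm z)\<^sup>2 * ((D$i$i + D$j$j) / 2))"
  proof (intro sum_mono)
    fix i j
    have "z$i * z$j * D$i$j \<le> \<bar>z$i\<bar> * \<bar>z$j\<bar> * \<bar>D$i$j\<bar>"
      by (simp add: abs_mult[symmetric])
    also have "\<dots> \<le> norm z * norm z * ((D$i$i + D$j$j) / 2)"
      by (intro mult_mono component_le_norm_cart psd_matrix_entry_bound[OF assms]) auto
    finally show "z$i * z$j * D$i$j \<le> (norm z)\<^sup>2 * ((D$i$i + D$j$j) / 2)"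
      by (simp add: power2_eq_square)
  qed
  also have "\<dots> = CARD('n) * (\<Sum>i\<in>UNIV. D$i$i) * (norm z)\<^sup>2"
    by (simp add: sum_distrib_left[symmetric] sum.distrib add_divide_distrib
        sum_divide_distrib[symmetric] card_UNIV_def)
  finally show ?thesis .
qed

lemma incseq_bounded_small_step:
  fixes f :: "nat \<Rightarrow> real"
  assumes "incseq f" "\<And>k. f k \<le> M" "\<epsilon> > 0"
  obtains k where "f (Suc k) - f k < \<epsilon>"
proof -
  obtain L where lim: "f \<longlonglongrightarrow> L"
    using incseq_convergent[OF assms(1)] assms(2) by blast
  have "(\<lambda>k. f (Suc k) - f k) \<longlonglongrightarrow> L - L"
    by (rule tendsto_diff[OF LIMSEQ_Suc[OF lim] lim])
  then have "\<forall>\<^sub>F k in sequentially. f (Suc k) - f k < \<epsilon>"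
    using assms(3) by (simp add: order_tendstoD(2))
  then obtain N where "\<forall>k\<ge>N. f (Suc k) - f k < \<epsilon>"
    unfolding eventually_sequentially by blast
  then show ?thesis
    using that by blast
qed

text \<open>The Riccati iterates increase and are bounded by the cost, so their traces converge and
  some step \<open>D = P\<^sub>k\<^sub>+\<^sub>1 - P\<^sub>k\<close> has trace \<open>< 1 / (2n)\<close>; then \<open>quad_form D \<le> \<bar>_\<bar>\<^sup>2 / 2\<close>, and
  \<open>P\<^sub>k\<close> is a Lyapunov matrix for the closed loop with the Riccati gain of \<open>P\<^sub>k\<close>.\<close>

lemma stabilizable_if_bounded_lq_cost:
  fixes A :: "real^'n^'n" and B :: "real^'m^'n"
  assumes cost: "\<And>z. \<exists>v. \<forall>k. lq_cost A B z v k \<le> c * (norm z)\<^sup>2"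
  shows "stabilizable A B"
proof -
  let ?P = "riccati_iter A B"
  define tr where "tr k = (\<Sum>i\<in>UNIV. ?P k $ i $ i)" for k
  define n where "n = real CARD('n)"
  have "?P k $ i $ i \<le> ?P (Suc k) $ i $ i" for k i
    using riccati_iter_mono[of A B k "axis i 1"] by (simp only: quad_form_axis)
  then have "incseq tr"
    unfolding tr_def by (intro incseq_SucI sum_mono)
  moreover have "tr k \<le> n * c" for k
  proof -
    have "?P k $ i $ i \<le> c" for i
    proof -
      obtain v where "\<forall>k. lq_cost A B (axis i 1) v k \<le> c * (norm (axis i (1::real)))\<^sup>2"
        using cost by blast
      then have "lq_cost A B (axis i 1) v k \<le> c"
        by simp
      moreover have "?P k $ i $ i \<le> lq_cost A B (axis i 1) v k"
        using riccati_iter_le_lq_cost[of A B k "axis i 1" v] by (simp add: quad_form_axis)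
      ultimately show ?thesis
        by linarith
    qed
    then show ?thesis
      unfolding tr_def n_def using sum_mono[of UNIV "\<lambda>i. ?P k $ i $ i" "\<lambda>_. c"] by simp
  qed
  moreover have "1 / (2 * n) > 0"
    by (simp add: n_def)
  ultimately obtain k where small: "tr (Suc k) - tr k < 1 / (2 * n)"
    by (rule incseq_bounded_small_step)
  define S where "S = ?P k"
  define K where "K = riccati_gain A B S"
  define D where "D = ?P (Suc k) - S"
  have S: "psd_matrix S"
    by (simp add: S_def psd_riccati_iter)
  have "psd_matrix D"
    using psd_riccati_iter[of A B "Suc k"] psd_riccati_iter[of A B k] riccati_iter_mono[of A B k]
    unfolding psd_matrix_def D_def S_def
    by (simp add: transpose_diff_matrix quad_form_diff_matrix del: riccati_iter.simps)
  then have D_small: "quad_form D z \<le> (norm z)\<^sup>2 / 2" for z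
  proof -
    have "quad_form D z \<le> n * (tr (Suc k) - tr k) * (norm z)\<^sup>2"
      using quad_form_le_trace[OF \<open>psd_matrix D\<close>, of z]
      by (simp add: n_def tr_def D_def S_def sum_subtractf)
    also have "\<dots> \<le> n * (1 / (2 * n)) * (norm z)\<^sup>2"
      using small by (intro mult_right_mono mult_left_mono) (auto simp: n_def)
    finally show ?thesis by (simp add: n_def)
  qed
  have "quad_form S ((A + B ** K) *v z) < quad_form S z" if "z \<noteq> 0" for z
  proof -
    have "quad_form S ((A + B ** K) *v z) = quad_form (?P (Suc k)) z - (norm z)\<^sup>2 - (norm (K *v z))\<^sup>2"
      by (simp add: quad_form_riccati_map K_def S_def matrix_vector_mult_add_rdistrib
          matrix_vector_mul_assoc)
    also have "\<dots> \<le> quad_form S z - (norm z)\<^sup>2 / 2"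
      using D_small[of z] zero_le_power2[of "norm (K *v z)"]
      unfolding D_def quad_form_diff_matrix by linarith
    also have "\<dots> < quad_form S z"
      using that by simp
    finally show ?thesis .
  qed
  then have "schur_stable (A + B ** K)"
    by (rule schur_stable_if_lyapunov[OF S])
  then show ?thesis
    unfolding stabilizable_def by blast
qed

section \<open>Bounded cost from asymptotic null controllability\<close>

lemma traj_superposition:
  "traj A B (\<Sum>i\<in>I. c i *\<^sub>R z i) (\<lambda>t. \<Sum>i\<in>I. c i *\<^sub>R v i t) t = (\<Sum>i\<in>I. c i *\<^sub>R traj A B (z i) (v i) t)"
  by (induction t)
    (simp_all add: linear_sum[OF matrix_vector_mul_linear] matrix_vector_mult_scaleR sum.distrib scaleR_add_right)

lemma norm_sum_component_scaleR_le:
  fixes f :: "'n::finite \<Rightarrow> 'a::real_normed_vector"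
  shows "norm (\<Sum>i\<in>UNIV. z$i *\<^sub>R f i) \<le> norm (z::real^'n) * (\<Sum>i\<in>UNIV. norm (f i))"
proof -
  have "norm (\<Sum>i\<in>UNIV. z$i *\<^sub>R f i) \<le> (\<Sum>i\<in>UNIV. \<bar>z$i\<bar> * norm (f i))"
    by (rule order_trans[OF norm_sum]) simp
  also have "\<dots> \<le> (\<Sum>i\<in>UNIV. norm z * norm (f i))"
    by (intro sum_mono mult_right_mono component_le_norm_cart) auto
  finally show ?thesis
    by (simp add: sum_distrib_left)
qed

definition asymptotically_null_controllable :: "real^'n^'n \<Rightarrow> real^'m^'n \<Rightarrow> bool" where
  "asymptotically_null_controllable A B \<longleftrightarrow> (\<forall>z. \<exists>v. (\<lambda>t. traj A B z v t) \<longlonglongrightarrow> 0)"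

text \<open>Superpose the controls that steer the unit vectors close to \<open>0\<close>.\<close>

lemma contracting_block_if_null_controllable:
  fixes A :: "real^'n^'n" and B :: "real^'m^'n"
  assumes "asymptotically_null_controllable A B"
  shows "\<exists>T M. T > 0 \<and>
    (\<forall>z. \<exists>v. norm (traj A B z v T) \<le> norm z / 2 \<and> lq_cost A B z v T \<le> M * (norm z)\<^sup>2)"
proof -
  have "\<forall>i. \<exists>v. (\<lambda>t. traj A B (axis i 1) v t) \<longlonglongrightarrow> 0"
    using assms by (simp add: asymptotically_null_controllable_def)
  from choice[OF this] obtain V where V: "\<And>i. (\<lambda>t. traj A B (axis i 1) (V i) t) \<longlonglongrightarrow> 0"
    by blast
  define E where "E i t = traj A B (axis i 1) (V i) t" for i t
  define n where "n = real CARD('n)"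
  have "\<forall>\<^sub>F t in sequentially. norm (E i t) \<le> 1 / (2 * n)" for i
    using order_tendstoD(2)[OF tendsto_norm_zero[OF V[of i]], of "1 / (2 * n)"]
    by (auto simp: E_def n_def elim: eventually_mono)
  then have "\<forall>\<^sub>F t in sequentially. Suc 0 \<le> t \<and> (\<forall>i. norm (E i t) \<le> 1 / (2 * n))"
    by (intro eventually_conj eventually_ge_at_top eventually_all_finite)
  then obtain T where T: "T > 0" "\<And>i. norm (E i T) \<le> 1 / (2 * n)"
    unfolding eventually_sequentially by auto
  define M where "M = (\<Sum>t<T. (\<Sum>i\<in>UNIV. norm (E i t))\<^sup>2 + (\<Sum>i\<in>UNIV. norm (V i t))\<^sup>2)"
  have "\<exists>v. norm (traj A B z v T) \<le> norm z / 2 \<and> lq_cost A B z v T \<le> M * (norm z)\<^sup>2" for z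
  proof -
    define v where "v t = (\<Sum>i\<in>UNIV. z$i *\<^sub>R V i t)" for t
    have expansion: "(\<Sum>i\<in>UNIV. z$i *\<^sub>R axis i (1::real)) = z"
      using basis_expansion[of z] by (simp add: scalar_mult_eq_scaleR)
    have traj_v: "traj A B z v t = (\<Sum>i\<in>UNIV. z$i *\<^sub>R E i t)" for t
      using traj_superposition[where I=UNIV and c="\<lambda>i. z$i" and z="\<lambda>i. axis i 1" and v=V]
      unfolding v_def[abs_def] by (simp add: E_def expansion)
    have "norm (traj A B z v T) \<le> norm z * (\<Sum>i\<in>(UNIV::'n set). 1 / (2 * n))"
      unfolding traj_v
      by (rule order_trans[OF norm_sum_component_scaleR_le]) (intro mult_left_mono sum_mono T; simp)
    also have "\<dots> = norm z / 2"
      by (simp add: n_def)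
    finally have "norm (traj A B z v T) \<le> norm z / 2" .
    moreover have "lq_cost A B z v T \<le> M * (norm z)\<^sup>2"
      unfolding lq_cost_def M_def sum_distrib_right
    proof (intro sum_mono)
      fix t
      have "(norm (traj A B z v t))\<^sup>2 \<le> (norm z * (\<Sum>i\<in>UNIV. norm (E i t)))\<^sup>2"
        unfolding traj_v by (intro power_mono norm_sum_component_scaleR_le) simp
      moreover have "(norm (v t))\<^sup>2 \<le> (norm z * (\<Sum>i\<in>UNIV. norm (V i t)))\<^sup>2"
        unfolding v_def by (intro power_mono norm_sum_component_scaleR_le) simp
      ultimately show "(norm (traj A B z v t))\<^sup>2 + (norm (v t))\<^sup>2
          \<le> ((\<Sum>i\<in>UNIV. norm (E i t))\<^sup>2 + (\<Sum>i\<in>UNIV. norm (V i t))\<^sup>2) * (norm z)\<^sup>2"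
        unfolding power_mult_distrib by (simp only: ring_distribs mult.commute)
    qed
    ultimately show ?thesis
      by blast
  qed
  with \<open>T > 0\<close> show ?thesis
    by blast
qed

lemma traj_blockwise:
  fixes A :: "real^'n^'n" and B :: "real^'m^'n" and V :: "real^'n \<Rightarrow> nat \<Rightarrow> real^'m"
    and z :: "real^'n"
  assumes "T > 0"
  defines "start \<equiv> \<lambda>q. ((\<lambda>y. traj A B y (V y) T) ^^ q) z"
  shows "traj A B z (\<lambda>t. V (start (t div T)) (t mod T)) t
    = traj A B (start (t div T)) (V (start (t div T))) (t mod T)"
proof (induction t)
  case 0
  show ?case by (simp add: start_def)
next
  case (Suc t)
  show ?case
  proof (cases "Suc (t mod T) = T")
    case True
    then have "traj A B y v T = A *v traj A B y v (t mod T) + B *v v (t mod T)" for y v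
      by (metis traj.simps(2))
    with True show ?thesis
      using Suc.IH by (simp add: mod_Suc div_Suc start_def)
  next
    case False
    then show ?thesis
      using Suc.IH by (simp add: mod_Suc div_Suc)
  qed
qed

lemma lq_cost_blockwise:
  fixes A :: "real^'n^'n" and B :: "real^'m^'n" and V :: "real^'n \<Rightarrow> nat \<Rightarrow> real^'m"
    and z :: "real^'n"
  assumes "T > 0"
  defines "start \<equiv> \<lambda>q. ((\<lambda>y. traj A B y (V y) T) ^^ q) z"
  shows "lq_cost A B z (\<lambda>t. V (start (t div T)) (t mod T)) (k * T)
    = (\<Sum>q<k. lq_cost A B (start q) (V (start q)) T)"
proof -
  define w where "w t = V (start (t div T)) (t mod T)" for t
  define c where "c t = (norm (traj A B z w t))\<^sup>2 + (norm (w t))\<^sup>2" for t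
  have "(\<Sum>t\<in>{q*T..<q*T+T}. c t) = lq_cost A B (start q) (V (start q)) T" for q
  proof -
    have "(\<Sum>t\<in>{q*T..<q*T+T}. c t) = (\<Sum>r<T. c (r + q*T))"
      using sum.shift_bounds_nat_ivl[of c 0 "q*T" T] by (simp add: add.commute atLeast0LessThan)
    also have "\<dots> = lq_cost A B (start q) (V (start q)) T"
      unfolding lq_cost_def
    proof (intro sum.cong refl)
      fix r assume "r \<in> {..<T}"
      then have "(r + q*T) div T = q" "(r + q*T) mod T = r"
        by auto
      then show "c (r + q*T) = (norm (traj A B (start q) (V (start q)) r))\<^sup>2 + (norm (V (start q) r))\<^sup>2"
        using traj_blockwise[OF assms(1), where A=A and B=B and V=V and z=z and t="r + q*T"]
        by (simp add: c_def w_def[abs_def] start_def)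
    qed
    finally show ?thesis .
  qed
  then show ?thesis
    unfolding lq_cost_def w_def[symmetric] c_def[symmetric] by (simp add: sum.nat_group[symmetric])
qed

text \<open>Repeating a contracting block on the successive block end states shrinks the block costs
  geometrically, by the factor \<open>1/4\<close>.\<close>

lemma bounded_lq_cost_if_contracting_block:
  fixes A :: "real^'n^'n" and B :: "real^'m^'n"
  assumes "T > 0"
    and block: "\<And>y. \<exists>v. norm (traj A B y v T) \<le> norm y / 2 \<and> lq_cost A B y v T \<le> M * (norm y)\<^sup>2"
  shows "\<exists>v. \<forall>k. lq_cost A B z v k \<le> 2 * M * (norm z)\<^sup>2"
proof -
  have "\<forall>y. \<exists>v. norm (traj A B y v T) \<le> norm y / 2 \<and> lq_cost A B y v T \<le> M * (norm y)\<^sup>2"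
    using block by blast
  from choice[OF this] obtain V where
    V_contract: "\<And>y. norm (traj A B y (V y) T) \<le> norm y / 2" and
    V_cost: "\<And>y. lq_cost A B y (V y) T \<le> M * (norm y)\<^sup>2"
    by blast
  have "M \<ge> 0"
    using V_cost[of "axis undefined 1"] lq_cost_nonneg[of A B "axis undefined 1" "V (axis undefined 1)" T]
    by simp
  define start where "start q = ((\<lambda>y. traj A B y (V y) T) ^^ q) z" for q
  have start_norm: "norm (start q) \<le> (1/2)^q * norm z" for q
  proof (induction q)
    case 0
    show ?case by (simp add: start_def)
  next
    case (Suc q)
    then show ?case
      using V_contract[of "start q"] by (simp add: start_def)
  qed
  have "lq_cost A B z (\<lambda>t. V (start (t div T)) (t mod T)) k \<le> 2 * M * (norm z)\<^sup>2" for k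
  proof -
    have "lq_cost A B z (\<lambda>t. V (start (t div T)) (t mod T)) k
        \<le> lq_cost A B z (\<lambda>t. V (start (t div T)) (t mod T)) (k * T)"
      using \<open>T > 0\<close> by (intro lq_cost_mono) simp
    also have "\<dots> = (\<Sum>q<k. lq_cost A B (start q) (V (start q)) T)"
      using lq_cost_blockwise[OF \<open>T > 0\<close>] by (simp add: start_def[abs_def])
    also have "\<dots> \<le> (\<Sum>q<k. M * (norm z)\<^sup>2 * (1/4)^q)"
    proof (intro sum_mono)
      fix q
      have "(norm (start q))\<^sup>2 \<le> ((1/2)^q * norm z)\<^sup>2"
        using start_norm by (intro power_mono) auto
      also have "\<dots> = (norm z)\<^sup>2 * (1/4)^q"
        by (simp add: power_mult_distrib power2_eq_square mult.commute flip: power_mult_distrib)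
      finally have "M * (norm (start q))\<^sup>2 \<le> M * (norm z)\<^sup>2 * (1/4)^q"
        using \<open>M \<ge> 0\<close> by (simp add: mult_left_mono mult.assoc)
      then show "lq_cost A B (start q) (V (start q)) T \<le> M * (norm z)\<^sup>2 * (1/4)^q"
        using V_cost[of "start q"] by linarith
    qed
    also have "\<dots> \<le> M * (norm z)\<^sup>2 * 2"
    proof -
      have "(\<Sum>q<k. (1/4::real)^q) \<le> 2"
        using geometric_sum_less[of "1/4::real" "{..<k}"] by simp
      then show ?thesis
        using \<open>M \<ge> 0\<close> by (simp add: sum_distrib_left[symmetric] mult_left_mono)
    qed
    finally show ?thesis
      by simp
  qed
  then show ?thesis
    by blast
qed

section \<open>The closed-loop network\<close>

lemma closed_loop_solution_exists:
  fixes A :: "real^'n^'n" and B :: "real^'m^'n" and C :: "real^'n^'p"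
    and a :: "'N::finite \<Rightarrow> 'N \<Rightarrow> real" and G :: "real^'p^'n" and K :: "real^'n^'m"
  shows "\<exists>x xh uh s su xd ud u. closed_loop A B C a \<gamma> \<alpha> \<alpha>u L Lu G K x xh uh s su xd ud u
           \<and> x 0 = x_init \<and> xh 0 = xh_init \<and> uh 0 = uh_init"
proof -
  define control where "control Xh i = K *v (\<Sum>j\<in>{j. a i j > 0}. a i j *\<^sub>R (Xh j - Xh i))"
    for Xh :: "'N \<Rightarrow> real^'n" and i
  define step where "step t (st :: ('N \<Rightarrow> real^'n) \<times> ('N \<Rightarrow> real^'n) \<times> ('N \<Rightarrow> real^'m)) =
    (let X = fst st; Xh = fst (snd st); Uh = snd (snd st);
       Xh' = (\<lambda>j. A *v Xh j + (\<gamma> ^ t) *\<^sub>R (G *v vquant \<alpha> L ((1 / \<gamma> ^ t) *\<^sub>R (C *v X j - C *v Xh j)))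
                  + B *v Uh j);
       Uh' = (\<lambda>j. Uh j + (\<gamma> ^ t) *\<^sub>R vquant \<alpha>u Lu ((1 / \<gamma> ^ t) *\<^sub>R (control Xh' j - Uh j)))
     in (\<lambda>i. A *v X i + B *v control Xh i, Xh', Uh'))" for t st
  define st where "st = rec_nat (x_init, xh_init, uh_init) step"
  define x where "x t = fst (st t)" for t
  define xh where "xh t = fst (snd (st t))" for t
  define uh where "uh t = snd (snd (st t))" for t
  define s where "s t j = (case t of 0 \<Rightarrow> 0
    | Suc t' \<Rightarrow> vquant \<alpha> L ((1 / \<gamma> ^ t') *\<^sub>R (C *v x t' j - C *v xh t' j)))" for t j
  define su where "su t j = (case t of 0 \<Rightarrow> 0
    | Suc t' \<Rightarrow> vquant \<alpha>u Lu ((1 / \<gamma> ^ t') *\<^sub>R (control (xh t) j - uh t' j)))" for t j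
  have st_Suc: "st (Suc t) = step t (st t)" for t
    by (simp add: st_def)
  have xh_Suc: "xh (Suc t) j = A *v xh t j + (\<gamma> ^ t) *\<^sub>R (G *v s (Suc t) j) + B *v uh t j" for t j
    by (simp add: x_def xh_def uh_def s_def st_Suc step_def Let_def)
  then have "xh (Suc t) = (\<lambda>j. A *v xh t j + (\<gamma> ^ t) *\<^sub>R (G *v s (Suc t) j) + B *v uh t j)" for t
    by blast
  then have "closed_loop A B C a \<gamma> \<alpha> \<alpha>u L Lu G K x xh uh s su (\<lambda>t i j. xh t j) (\<lambda>t i j. uh t j)
      (\<lambda>t. control (xh t))"
    unfolding closed_loop_def using xh_Suc
    by (simp add: x_def xh_def uh_def s_def su_def control_def st_Suc step_def Let_def)
  moreover have "x 0 = x_init \<and> xh 0 = xh_init \<and> uh 0 = uh_init"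
    by (simp add: x_def xh_def uh_def st_def)
  ultimately show ?thesis
    by blast
qed

lemma closed_loop_agent_difference:
  assumes "closed_loop A B C a \<gamma> \<alpha> \<alpha>u L Lu G K x xh uh s su xd ud u"
  shows "x t j - x t i = traj A B (x 0 j - x 0 i) (\<lambda>t. u t j - u t i) t"
proof (induction t)
  case 0
  show ?case by simp
next
  case (Suc t)
  have "x (Suc t) l = A *v x t l + B *v u t l" for l
    using assms by (simp add: closed_loop_def)
  then have "x (Suc t) j - x (Suc t) i = A *v (x t j - x t i) + B *v (u t j - u t i)"
    by (simp add: matrix_vector_mult_diff_distrib)
  then show ?case
    using Suc.IH by simp
qed

lemma null_control_if_synchronising:
  fixes A :: "real^'n^'n" and B :: "real^'m^'n" and C :: "real^'n^'p"
    and a :: "'N::finite \<Rightarrow> 'N \<Rightarrow> real" and G :: "real^'p^'n" and K :: "real^'n^'m"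
    and z :: "real^'n" and i j :: 'N
  assumes "i \<noteq> j" and "infnorm z < Cx"
    and sync: "\<forall>x xh uh s su xd ud u.
      closed_loop A B C a \<gamma> \<alpha> \<alpha>u L Lu G K x xh uh s su xd ud u \<and>
      (\<forall>l. infnorm (x 0 l) < Cx \<and> infnorm (xh 0 l) < 1 \<and> infnorm (uh 0 l) < 1)
      \<longrightarrow> (\<forall>i j. (\<lambda>t. x t j - x t i) \<longlonglongrightarrow> 0)"
  shows "\<exists>v. (\<lambda>t. traj A B z v t) \<longlonglongrightarrow> 0"
proof -
  obtain x xh uh s su xd ud u where cl: "closed_loop A B C a \<gamma> \<alpha> \<alpha>u L Lu G K x xh uh s su xd ud u"
    and init: "x 0 = (\<lambda>l. if l = j then z else 0)" "xh 0 = (\<lambda>_. 0)" "uh 0 = (\<lambda>_. 0)"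
    using closed_loop_solution_exists[where A=A and B=B and C=C and a=a and \<gamma>=\<gamma> and \<alpha>=\<alpha>
        and \<alpha>u=\<alpha>u and L=L and Lu=Lu and G=G and K=K and x_init="\<lambda>l. if l = j then z else 0"
        and xh_init="\<lambda>_. 0" and uh_init="\<lambda>_. 0"]
    by blast
  have "\<forall>l. infnorm (x 0 l) < Cx \<and> infnorm (xh 0 l) < 1 \<and> infnorm (uh 0 l) < 1"
    using \<open>infnorm z < Cx\<close> infnorm_pos_le[of z] by (simp add: init infnorm_0)
  with sync cl have "(\<lambda>t. x t j - x t i) \<longlonglongrightarrow> 0"
    by blast
  then show ?thesis
    using closed_loop_agent_difference[OF cl] \<open>i \<noteq> j\<close> by (auto simp: init)
qed

theorem theorem5:
  fixes A :: "real^'n^'n" and B :: "real^'m^'n" and C :: "real^'n^'p"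
    and a :: "'N::finite \<Rightarrow> 'N \<Rightarrow> real"
  assumes N2: "CARD('N) \<ge> 2"
    and adj_diag: "\<forall>i. a i i = 0"
    and adj_nonneg: "\<forall>i j. a i j \<ge> 0"
    and coop: "\<forall>Cx Cxh Cuh::real. Cx > 0 \<and> Cxh > 0 \<and> Cuh > 0 \<longrightarrow>
      (\<exists>(\<gamma>::real) (\<alpha>::real) (\<alpha>u::real) (L::nat) (Lu::nat) (G::real^'p^'n) (K::real^'n^'m).
         0 < \<gamma> \<and> \<gamma> < 1 \<and> 0 < \<alpha> \<and> \<alpha> \<le> 1 \<and> 0 < \<alpha>u \<and> \<alpha>u \<le> 1 \<and> 0 < L \<and> 0 < Lu \<and>
         (\<forall>x xh uh s su xd ud u.
            closed_loop A B C a \<gamma> \<alpha> \<alpha>u L Lu G K x xh uh s su xd ud u \<and>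
            (\<forall>i. infnorm (x 0 i) < Cx \<and> infnorm (xh 0 i) < Cxh \<and> infnorm (uh 0 i) < Cuh)
            \<longrightarrow> (\<forall>i j. (\<lambda>t. x t j - x t i) \<longlonglongrightarrow> 0)))"
  shows "stabilizable A B"
proof -
  obtain i j :: 'N where "i \<noteq> j"
    using N2 by (metis card_2_iff' card_le_Suc0_iff_eq finite not_less_eq_eq numeral_2_eq_2)
  have "asymptotically_null_controllable A B"
    unfolding asymptotically_null_controllable_def
  proof
    fix z :: "real^'n"
    have "0 < infnorm z + 1 \<and> 0 < (1::real) \<and> 0 < (1::real)"
      using infnorm_pos_le[of z] by simp
    from coop[rule_format, OF this] show "\<exists>v. (\<lambda>t. traj A B z v t) \<longlonglongrightarrow> 0"
      by (elim exE conjE) (erule null_control_if_synchronising[OF \<open>i \<noteq> j\<close> less_add_one])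
  qed
  then obtain T M where block_time: "T > 0"
    and block: "\<And>z. \<exists>v. norm (traj A B z v T) \<le> norm z / 2 \<and> lq_cost A B z v T \<le> M * (norm z)\<^sup>2"
    using contracting_block_if_null_controllable by blast
  show ?thesis
    by (rule stabilizable_if_bounded_lq_cost bounded_lq_cost_if_contracting_block[OF block_time block])+
qed

end
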